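(* Assume that $f$ obeys $RC(\alpha,\beta,\epsilon)$ for all $\mathbf{z} \in E(\epsilon)$. Furthermore, suppose $\mathbf{z}_0 \in E(\epsilon)$, and assume $0<\mu\le {2}/{\beta}$. Consider the following update \[ \mathbf{z}_{\tau+1}=\mathbf{z}_\tau-\mu\nabla f(\mathbf{z}_\tau). \] Then for all $\tau$ we have $\mathbf{z}_\tau\in E(\epsilon)$ and \begin{align*} \text{dist}^2(\mathbf{z}_\tau,\mathbf{x})\le \left(1-\frac{2\mu}{\alpha}\right)^\tau \text{dist}^2(\mathbf{z}_0,\mathbf{x}). \end{align*}
   Context: $f:\mathbb{C}^n\to\mathbb{R}$ (in the paper, $f(\mathbf{z})=\frac{1}{2m}\sum_r(y_r-|\mathbf{a}_r^*\mathbf{z}|^2)^2$) with Wirtinger gradient $\nabla f(\mathbf{z})=(\partial f/\partial\mathbf{z})^*$. $\mathbf{x}\in\mathbb{C}^n$ is a planted solution, $P=\{\mathbf{x}e^{i\phi}:\phi\in[0,2\pi]\}$, $E(\epsilon)=\{\mathbf{z}\in\mathbb{C}^n:\text{dist}(\mathbf{z},P)\le\epsilon\}$, $\phi(\mathbf{z})=\arg\min_{\phi\in[0,2\pi]}\|\mathbf{z}-e^{i\phi}\mathbf{x}\|_2$ and $\text{dist}(\mathbf{z},\mathbf{x})=\|\mathbf{z}-e^{i\phi(\mathbf{z})}\mathbf{x}\|_2$. Regularity condition $RC(\alpha,\beta,\epsilon)$: for all $\mathbf{z}\in E(\epsilon)$, $\operatorname{Re}\left(\langle \nabla f(\mathbf{z}),\mathbf{z}-\mathbf{x}e^{i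 \phi(\mathbf{z})}\rangle\right) \ge \frac{1}{\alpha}\text{dist}^2(\mathbf{z},\mathbf{x})+\frac{1}{\beta}\|\nabla f(\mathbf{z})\|_2^2$. *)

theory Defs
  imports "HOL-Analysis.Analysis"
begin

definition cscale :: "complex \<Rightarrow> complex ^ 'n \<Rightarrow> complex ^ 'n" where
  "cscale c v = (\<chi> k. c * v $ k)"

definition cinner :: "complex ^ 'n \<Rightarrow> complex ^ 'n \<Rightarrow> complex" where
  "cinner u v = (\<Sum>k\<in>UNIV. cnj (u $ k) * v $ k)"

text \<open>Wirtinger gradient of a real-valued f: (df/dz)^* with components
  (1/2)(df/dx_k + i df/dy_k), partial derivatives taken as real derivatives.\<close>
definition wgrad :: "(complex ^ 'n \<Rightarrow> real) \<Rightarrow> complex ^ 'n \<Rightarrow> complex ^ 'n" where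
  "wgrad f z = (\<chi> k.
      (complex_of_real (deriv (\<lambda>t. f (z + t *\<^sub>R axis k 1)) 0)
       + \<i> * complex_of_real (deriv (\<lambda>t. f (z + t *\<^sub>R axis k \<i>)) 0)) / 2)"

definition solset :: "complex ^ 'n \<Rightarrow> (complex ^ 'n) set" where
  "solset x = {cscale (cis \<phi>) x | \<phi>. \<phi> \<in> {0..2*pi}}"

definition Eset :: "complex ^ 'n \<Rightarrow> real \<Rightarrow> (complex ^ 'n) set" where
  "Eset x \<epsilon> = {z. infdist z (solset x) \<le> \<epsilon>}"

definition phase :: "complex ^ 'n \<Rightarrow> complex ^ 'n \<Rightarrow> real" where
  "phase x z = (SOME \<phi>. \<phi> \<in> {0..2*pi} \<and>
      (\<forall>\<psi>\<in>{0..2*pi}. norm (z - cscale (cis \<phi>) x) \<le> norm (z - cscale (cis \<psi>) x)))"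

definition pdist :: "complex ^ 'n \<Rightarrow> complex ^ 'n \<Rightarrow> real" where
  "pdist z x = norm (z - cscale (cis (phase x z)) x)"

definition RC :: "(complex ^ 'n \<Rightarrow> real) \<Rightarrow> complex ^ 'n \<Rightarrow> real \<Rightarrow> real \<Rightarrow> real \<Rightarrow> bool" where
  "RC f x \<alpha> \<beta> \<epsilon> \<longleftrightarrow> (\<forall>z\<in>Eset x \<epsilon>.
      Re (cinner (wgrad f z) (z - cscale (cis (phase x z)) x))
        \<ge> (1/\<alpha>) * (pdist z x)\<^sup>2 + (1/\<beta>) * (norm (wgrad f z))\<^sup>2)"

end

theory Submission
  imports Defs
begin

text \<open>The real part of the Hermitian inner product is the real inner product of the
  underlying real vector space. Writing \<open>g\<close> for the gradient at \<open>z\<close> and \<open>h\<close> for the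
  difference between \<open>z\<close> and its closest point of \<open>P\<close>, the regularity condition gives
  \<open>\<parallel>h - \<mu> g\<parallel>\<^sup>2 = \<parallel>h\<parallel>\<^sup>2 - 2\<mu> \<langle>g,h\<rangle> + \<mu>\<^sup>2 \<parallel>g\<parallel>\<^sup>2 \<le> (1 - 2\<mu>/\<alpha>) \<parallel>h\<parallel>\<^sup>2\<close> once \<open>\<mu> \<le> 2/\<beta>\<close>.
  That closest point is still a point of \<open>P\<close>, so the distance of the next iterate to \<open>P\<close>
  is at most \<open>\<parallel>h - \<mu> g\<parallel>\<close>. Hence the distance never grows, which keeps the iterates in
  \<open>E(\<epsilon>)\<close> where the condition applies, and it shrinks geometrically.\<close>

lemma phase_minimizes:
  fixes x z :: "complex ^ 'n"
  shows "phase x z \<in> {0..2*pi}"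
    and "\<psi> \<in> {0..2*pi} \<Longrightarrow> pdist z x \<le> norm (z - cscale (cis \<psi>) x)"
proof -
  have cont: "continuous_on {0..2*pi} (\<lambda>\<psi>. norm (z - cscale (cis \<psi>) x))"
    unfolding cscale_def by (intro continuous_intros continuous_on_vec_lambda)
  have "\<exists>\<phi>\<in>{0..2*pi}. \<forall>\<psi>\<in>{0..2*pi}.
      norm (z - cscale (cis \<phi>) x) \<le> norm (z - cscale (cis \<psi>) x)"
    using continuous_attains_inf[OF compact_Icc _ cont] by auto
  then have "\<exists>\<phi>. \<phi> \<in> {0..2*pi} \<and>
      (\<forall>\<psi>\<in>{0..2*pi}. norm (z - cscale (cis \<phi>) x) \<le> norm (z - cscale (cis \<psi>) x))"
    by blast
  from someI_ex[OF this, folded phase_def]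
  show "phase x z \<in> {0..2*pi}"
    and "\<psi> \<in> {0..2*pi} \<Longrightarrow> pdist z x \<le> norm (z - cscale (cis \<psi>) x)"
    unfolding pdist_def by auto
qed

lemma infdist_solset_eq_pdist:
  fixes x z :: "complex ^ 'n"
  shows "infdist z (solset x) = pdist z x"
proof (rule antisym)
  have mem: "cscale (cis (phase x z)) x \<in> solset x"
    using phase_minimizes(1) unfolding solset_def by blast
  then show "infdist z (solset x) \<le> pdist z x"
    using infdist_le[OF mem, of z] unfolding pdist_def by (simp add: dist_norm)
  show "pdist z x \<le> infdist z (solset x)"
    unfolding infdist_notempty[OF ex_in_conv[THEN iffD1, OF exI, OF mem]]
  proof (rule cINF_greatest)
    fix a assume "a \<in> solset x"
    then obtain \<psi> where "\<psi> \<in> {0..2*pi}" "a = cscale (cis \<psi>) x"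
      unfolding solset_def by blast
    then show "pdist z x \<le> dist z a"
      using phase_minimizes(2) by (simp add: dist_norm)
  qed (use mem in blast)
qed

lemma mem_Eset_iff: "z \<in> Eset x \<epsilon> \<longleftrightarrow> pdist z x \<le> \<epsilon>"
  unfolding Eset_def by (simp add: infdist_solset_eq_pdist)

lemma Re_cinner_eq_inner: "Re (cinner u v) = inner u v"
  unfolding cinner_def inner_vec_def by (simp add: Re_sum inner_complex_def)

lemma norm_step_contracts:
  fixes g h :: "'a :: real_inner"
  assumes "\<alpha> > 0" "\<beta> > 0" "0 < \<mu>" "\<mu> \<le> 2 / \<beta>"
    and reg: "inner g h \<ge> (1/\<alpha>) * (norm h)\<^sup>2 + (1/\<beta>) * (norm g)\<^sup>2"
  shows "(norm (h - \<mu> *\<^sub>R g))\<^sup>2 \<le> (1 - 2 * \<mu> / \<alpha>) * (norm h)\<^sup>2"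
proof -
  have expand: "(norm (h - \<mu> *\<^sub>R g))\<^sup>2 = (norm h)\<^sup>2 - 2 * \<mu> * inner g h + \<mu>\<^sup>2 * (norm g)\<^sup>2"
    unfolding power2_norm_eq_inner
    by (simp add: inner_diff_left inner_diff_right inner_commute algebra_simps power2_eq_square)
  have "\<mu> * (\<mu> * (norm g)\<^sup>2) \<le> \<mu> * ((2/\<beta>) * (norm g)\<^sup>2)"
    using assms(3,4) by (intro mult_left_mono mult_right_mono) auto
  then have "\<mu>\<^sup>2 * (norm g)\<^sup>2 \<le> 2 * \<mu> * ((1/\<beta>) * (norm g)\<^sup>2)"
    by (simp add: power2_eq_square algebra_simps)
  then show ?thesis
    using expand mult_left_mono[OF reg, of "2*\<mu>"] assms(3) by (simp add: algebra_simps)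
qed

lemma gradient_step_contracts:
  fixes f :: "complex ^ 'n \<Rightarrow> real"
  assumes "\<alpha> > 0" "\<beta> > 0" "RC f x \<alpha> \<beta> \<epsilon>" "z \<in> Eset x \<epsilon>" "0 < \<mu>" "\<mu> \<le> 2 / \<beta>"
  shows "(pdist (z - \<mu> *\<^sub>R wgrad f z) x)\<^sup>2 \<le> (1 - 2 * \<mu> / \<alpha>) * (pdist z x)\<^sup>2"
proof -
  define g where "g = wgrad f z"
  define h where "h = z - cscale (cis (phase x z)) x"
  have regular: "inner g h \<ge> (1/\<alpha>) * (norm h)\<^sup>2 + (1/\<beta>) * (norm g)\<^sup>2"
    using assms(3,4) unfolding RC_def g_def h_def pdist_def by (auto simp: Re_cinner_eq_inner)
  have "pdist (z - \<mu> *\<^sub>R g) x \<le> norm (h - \<mu> *\<^sub>R g)"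
    using phase_minimizes(2)[where z = "z - \<mu> *\<^sub>R g", OF phase_minimizes(1)[of x z]]
    unfolding h_def by (simp add: algebra_simps)
  then have "(pdist (z - \<mu> *\<^sub>R g) x)\<^sup>2 \<le> (norm (h - \<mu> *\<^sub>R g))\<^sup>2"
    by (intro power_mono) (simp_all add: pdist_def)
  also have "\<dots> \<le> (1 - 2 * \<mu> / \<alpha>) * (norm h)\<^sup>2"
    using regular by (rule norm_step_contracts[OF assms(1,2,5,6)])
  also have "norm h = pdist z x"
    unfolding pdist_def h_def ..
  finally show ?thesis
    unfolding g_def .
qed

lemma nonneg_contraction_geometric:
  fixes a :: "nat \<Rightarrow> real"
  assumes nonneg: "\<And>t. 0 \<le> a t" and contr: "\<And>t. a (Suc t) \<le> c * a t"
  shows "a t \<le> c ^ t * a 0"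
proof (cases "c \<ge> 0")
  case True
  then show ?thesis
  proof (induction t)
    case (Suc t)
    then show ?case
      using contr[of t] mult_left_mono[OF Suc.IH Suc.prems] by simp
  qed simp
next
  case False \<comment> \<open>a nonnegative sequence can only contract by a negative factor if it vanishes\<close>
  have "a s = 0" for s
    using contr[of s] nonneg[of s] nonneg[of "Suc s"] False mult_neg_pos[of c "a s"]
    by linarith
  then show ?thesis by simp
qed

lemma gradient_iterates_stay_in_Eset:
  fixes f :: "complex ^ 'n \<Rightarrow> real" and z :: "nat \<Rightarrow> complex ^ 'n"
  assumes "\<alpha> > 0" "\<beta> > 0" "RC f x \<alpha> \<beta> \<epsilon>" "z 0 \<in> Eset x \<epsilon>" "0 < \<mu>" "\<mu> \<le> 2 / \<beta>"
    and iter: "\<And>\<tau>. z (Suc \<tau>) = z \<tau> - \<mu> *\<^sub>R wgrad f (z \<tau>)"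
  shows "z \<tau> \<in> Eset x \<epsilon>"
proof (induction \<tau>)
  case (Suc \<tau>)
  have "(pdist (z (Suc \<tau>)) x)\<^sup>2 \<le> (1 - 2 * \<mu> / \<alpha>) * (pdist (z \<tau>) x)\<^sup>2"
    using gradient_step_contracts[OF assms(1-3) Suc assms(5,6)] iter by simp
  also have "\<dots> \<le> (pdist (z \<tau>) x)\<^sup>2"
    using assms(1,5) mult_right_mono[of "1 - 2 * \<mu> / \<alpha>" 1 "(pdist (z \<tau>) x)\<^sup>2"]
    by simp
  finally have "pdist (z (Suc \<tau>)) x \<le> pdist (z \<tau>) x"
    by (simp add: pdist_def power2_le_iff_abs_le)
  with Suc show ?case by (simp add: mem_Eset_iff)
qed (use assms(4) in simp)

theorem lemma7p10:
  fixes f :: "complex ^ 'n \<Rightarrow> real" and x :: "complex ^ 'n"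
    and z :: "nat \<Rightarrow> complex ^ 'n" and \<alpha> \<beta> \<epsilon> \<mu> :: real
  assumes "\<alpha> > 0" and "\<beta> > 0"
    and "RC f x \<alpha> \<beta> \<epsilon>"
    and "z 0 \<in> Eset x \<epsilon>"
    and "0 < \<mu>" and "\<mu> \<le> 2 / \<beta>"
    and "\<And>\<tau>. z (Suc \<tau>) = z \<tau> - \<mu> *\<^sub>R wgrad f (z \<tau>)"
  shows "\<forall>\<tau>. z \<tau> \<in> Eset x \<epsilon> \<and>
           (pdist (z \<tau>) x)\<^sup>2 \<le> (1 - 2 * \<mu> / \<alpha>) ^ \<tau> * (pdist (z 0) x)\<^sup>2"
proof (intro allI conjI)
  fix \<tau>
  have in_E: "z t \<in> Eset x \<epsilon>" for t
    using gradient_iterates_stay_in_Eset assms by blast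
  show "z \<tau> \<in> Eset x \<epsilon>" by (fact in_E)
  show "(pdist (z \<tau>) x)\<^sup>2 \<le> (1 - 2 * \<mu> / \<alpha>) ^ \<tau> * (pdist (z 0) x)\<^sup>2"
  proof (rule nonneg_contraction_geometric[where a = "\<lambda>t. (pdist (z t) x)\<^sup>2"])
    show "(pdist (z (Suc t)) x)\<^sup>2 \<le> (1 - 2 * \<mu> / \<alpha>) * (pdist (z t) x)\<^sup>2" for t
      using gradient_step_contracts[OF assms(1-3) in_E assms(5,6)] assms(7) by simp
  qed simp
qed

end
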